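(* Let $n\ge2$ and let $\lambda_1,\dots,\lambda_n$ be real numbers with $\lambda_i\ne\lambda_j$ for $i\neq j$. Let $\sigma:\{1,\dots,n\}\to\{1,\dots,n\}$ be a permutation different from the identity, and let $M$ be the $n\times n$ matrix with entries $$M_{ij}=\lambda_j^{\,i}-\lambda_{\sigma(j)}^{\,i},\qquad 1\le i,j\le n.$$ If $v=(v_1,\dots,v_n)\in\mathbb{R}^n$ satisfies $Mv^T=0$, then there are two indices $i\neq j$ such that $v_i=v_j$. *)

theory Defs
  imports Complex_Main "HOL-Combinatorics.Permutations"
begin

definition Mmat :: "(nat \<Rightarrow> real) \<Rightarrow> (nat \<Rightarrow> nat) \<Rightarrow> nat \<Rightarrow> nat \<Rightarrow> real" where
  "Mmat lam \<sigma> i j = lam j ^ i - lam (\<sigma> j) ^ i"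

end

theory Submission
  imports Defs "HOL-Computational_Algebra.Polynomial"
begin

text \<open>Reindexing by \<open>\<sigma>\<close> turns \<open>M v = 0\<close> into
  \<open>\<Sum>\<^sub>k \<lambda>\<^sub>k\<^sup>i (v\<^sub>k - v\<^bsub>\<sigma>\<^sup>-\<^sup>1 k\<^esub>) = 0\<close> for \<open>i = 1..n\<close>.
  Pairing these weights with the coefficients of \<open>x \<Prod>\<^bsub>m \<noteq> k\<^esub> (x - \<lambda>\<^sub>m)\<close>, a polynomial
  of degree \<open>n\<close> without constant term that vanishes at every \<open>\<lambda>\<^sub>m\<close> except \<open>\<lambda>\<^sub>k\<close>,
  isolates the \<open>k\<close>-th weight; so \<open>v\<^sub>k = v\<^bsub>\<sigma>\<^sup>-\<^sup>1 k\<^esub>\<close> whenever \<open>\<lambda>\<^sub>k \<noteq> 0\<close>. At most one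
  \<open>\<lambda>\<^sub>k\<close> vanishes, so for a point \<open>a\<close> moved by \<open>\<sigma>\<close> this applies to \<open>a\<close> or to \<open>\<sigma> a\<close>.\<close>

lemma poly_eq_sum_coeff_atLeast1:
  fixes p :: "'a::comm_semiring_1 poly"
  assumes "coeff p 0 = 0" and "degree p \<le> N"
  shows "poly p x = (\<Sum>i=1..N. coeff p i * x ^ i)"
proof -
  have "poly p x = (\<Sum>i\<le>degree p. coeff p i * x ^ i)"
    by (rule poly_altdef)
  also have "\<dots> = (\<Sum>i\<le>N. coeff p i * x ^ i)"
    by (rule sum.mono_neutral_left) (use assms(2) in \<open>auto simp: coeff_eq_0\<close>)
  also have "\<dots> = (\<Sum>i=1..N. coeff p i * x ^ i)"
    using assms(1) by (simp add: atMost_atLeast0 sum.atLeast_Suc_atMost)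
  finally show ?thesis .
qed

lemma sum_poly_weighted_eq_0:
  fixes lam w :: "'b \<Rightarrow> 'a::comm_semiring_1"
  assumes power_sums: "\<And>i. i \<in> {1..N} \<Longrightarrow> (\<Sum>m\<in>S. lam m ^ i * w m) = 0"
    and "coeff p 0 = 0" and "degree p \<le> N"
  shows "(\<Sum>m\<in>S. poly p (lam m) * w m) = 0"
proof -
  have "(\<Sum>m\<in>S. poly p (lam m) * w m) = (\<Sum>m\<in>S. \<Sum>i=1..N. coeff p i * (lam m ^ i * w m))"
    using assms(2,3) by (simp add: poly_eq_sum_coeff_atLeast1 sum_distrib_right mult.assoc)
  also have "\<dots> = (\<Sum>i=1..N. coeff p i * (\<Sum>m\<in>S. lam m ^ i * w m))"
    by (subst sum.swap) (simp add: sum_distrib_left)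
  also have "\<dots> = 0"
    using power_sums by simp
  finally show ?thesis .
qed

lemma power_sums_eq_0_imp_weight_eq_0:
  fixes lam w :: "'b \<Rightarrow> 'a::idom"
  assumes "finite S" and "inj_on lam S" and "k \<in> S" and "lam k \<noteq> 0"
    and power_sums: "\<And>i. i \<in> {1..card S} \<Longrightarrow> (\<Sum>m\<in>S. lam m ^ i * w m) = 0"
  shows "w k = 0"
proof -
  define p where "p = pCons 0 (\<Prod>m\<in>S-{k}. [:-lam m, 1:])"
  have poly_p: "poly p x = x * (\<Prod>m\<in>S-{k}. x - lam m)" for x
    by (simp add: p_def poly_prod)
  have "degree (\<Prod>m\<in>S-{k}. [:-lam m, 1:]) = card (S - {k})"
    using assms(1) by (simp add: degree_prod_eq_sum_degree)
  then have "degree p \<le> card S"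
    unfolding p_def card.remove[OF assms(1,3)] by (metis degree_pCons_le)
  then have "(\<Sum>m\<in>S. poly p (lam m) * w m) = 0"
    using power_sums by (intro sum_poly_weighted_eq_0) (simp_all add: p_def)
  moreover have "(\<Sum>m\<in>S. poly p (lam m) * w m) = poly p (lam k) * w k"
    using assms(1,3) by (subst sum.remove) (fastforce simp: poly_p intro!: sum.neutral)+
  moreover have "poly p (lam k) \<noteq> 0"
    using assms(1-4) by (auto simp: poly_p inj_on_def)
  ultimately show ?thesis
    by simp
qed

lemma sum_permutes_apply_inv:
  assumes "\<sigma> permutes S"
  shows "(\<Sum>j\<in>S. g (\<sigma> j) j) = (\<Sum>k\<in>S. g k (inv \<sigma> k))"
  using sum.permute[OF assms, of "\<lambda>k. g k (inv \<sigma> k)"] by (simp add: permutes_inverses(2)[OF assms])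

lemma Mmat_row_sum_eq:
  assumes "\<sigma> permutes {1..n}"
  shows "(\<Sum>j=1..n. Mmat lam \<sigma> i j * v j) = (\<Sum>k=1..n. lam k ^ i * (v k - v (inv \<sigma> k)))"
  using sum_permutes_apply_inv[OF assms, of "\<lambda>k j. lam k ^ i * v j"]
  by (simp add: Mmat_def left_diff_distrib right_diff_distrib sum_subtractf)

theorem lemma5p2:
  fixes n :: nat and lam :: "nat \<Rightarrow> real" and \<sigma> :: "nat \<Rightarrow> nat" and v :: "nat \<Rightarrow> real"
  assumes "n \<ge> 2"
    and "\<And>i j. i \<in> {1..n} \<Longrightarrow> j \<in> {1..n} \<Longrightarrow> i \<noteq> j \<Longrightarrow> lam i \<noteq> lam j"
    and "\<sigma> permutes {1..n}"
    and "\<sigma> \<noteq> id"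
    and "\<And>i. i \<in> {1..n} \<Longrightarrow> (\<Sum>j=1..n. Mmat lam \<sigma> i j * v j) = 0"
  shows "\<exists>i\<in>{1..n}. \<exists>j\<in>{1..n}. i \<noteq> j \<and> v i = v j"
proof -
  have inj: "inj_on lam {1..n}"
    using assms(2) unfolding inj_on_def by blast
  have v_inv: "v k = v (inv \<sigma> k)" if "k \<in> {1..n}" "lam k \<noteq> 0" for k
    using power_sums_eq_0_imp_weight_eq_0[OF _ inj that, of "\<lambda>k. v k - v (inv \<sigma> k)"]
      assms(5) Mmat_row_sum_eq[OF assms(3)] by simp
  obtain a where moved: "\<sigma> a \<noteq> a"
    using assms(4) by (metis eq_id_iff)
  then have a: "a \<in> {1..n}"
    using assms(3) by (meson permutes_not_in)
  have \<sigma>a: "\<sigma> a \<in> {1..n}" and inv_a: "inv \<sigma> a \<in> {1..n}"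
    using a permutes_in_image[OF assms(3)] permutes_in_image[OF permutes_inv[OF assms(3)]] by auto
  show ?thesis
  proof (cases "lam a = 0")
    case True
    then have "v (\<sigma> a) = v a"
      using v_inv[OF \<sigma>a] assms(2)[OF a \<sigma>a] moved by (simp add: permutes_inverses(2)[OF assms(3)])
    then show ?thesis
      using a \<sigma>a moved by metis
  next
    case False
    moreover have "inv \<sigma> a \<noteq> a"
      using moved by (metis permutes_inverses(1)[OF assms(3)])
    ultimately show ?thesis
      using v_inv[OF a] a inv_a by metis
  qed
qed

end
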